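(* Let $d\ge1$, $s\in(0,1)$ and $0<\lambda\le\Lambda$. There exist $C>0$ and $\gamma>0$, depending only on $d,s,\lambda,\Lambda$, with the following property. Let $K:\mathbb{R}^d\to\mathbb{R}$ be a measurable kernel with $\lambda|y|^{-d-s}\le K(y)\le\Lambda|y|^{-d-s}$ and $K(y)=K(-y)$ for all $y\ne0$. Let $E\subset\mathbb{R}^d$ be a Borel set, $x\in\partial E$ and $r>0$. If $|E\cap B_r(x)|\le\gamma|B_r|$, then \[ \int_{B_r(x)\setminus B_{r/2}(x)}\tilde\chi_E(y)K(x-y)\,dy\ge\frac{C}{r^s}. \]
   Context: $B_\rho(x)$ is the open ball of radius $\rho$ centred at $x$, $B_\rho=B_\rho(0)$, and $|F|$ denotes Lebesgue measure. $\tilde\chi_E=\chi_{\mathbb{R}^d\setminus E}-\chi_E$. *)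

theory Defs
  imports "HOL-Analysis.Analysis"
begin

definition chi_tilde :: "'a set \<Rightarrow> 'a \<Rightarrow> real" where
  "chi_tilde E y = (if y \<in> E then -1 else 1)"

end

theory Submission
  imports Defs
begin

text \<open>On the annulus \<open>B\<^sub>r(x) - B\<^bsub>r/2\<^esub>(x)\<close> the kernel \<open>K(x - y)\<close> is pinched between
  \<open>\<lambda> r\<^bsup>-d-s\<^esup>\<close> and \<open>\<Lambda> (r/2)\<^bsup>-d-s\<^esup>\<close>. Hence the integrand is at least \<open>\<lambda> r\<^bsup>-d-s\<^esup>\<close>
  off \<open>E\<close> and falls short of that by at most \<open>(\<lambda> + 2\<^bsup>d+s\<^esup> \<Lambda>) r\<^bsup>-d-s\<^esup>\<close> on \<open>E\<close>. The annulus
  occupies the fixed fraction \<open>1 - 2\<^bsup>-d\<^esup>\<close> of \<open>B\<^sub>r\<close>, whereas \<open>E\<close> occupies at most the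
  fraction \<open>\<gamma>\<close>; for small \<open>\<gamma>\<close> the first effect wins by a multiple of
  \<open>r\<^bsup>-d-s\<^esup> |B\<^sub>r| \<sim> r\<^bsup>-s\<^esup>\<close>. The argument never uses that \<open>x\<close> lies on the boundary of \<open>E\<close>.\<close>

lemma lebesgue_measurable_reflection:
  fixes x :: "'a::euclidean_space"
  shows "(\<lambda>y. x - y) \<in> lebesgue \<rightarrow>\<^sub>M lebesgue"
proof -
  have "(\<lambda>y. x + (\<Sum>j\<in>Basis. (- 1 * (y \<bullet> j)) *\<^sub>R j)) = (\<lambda>y::'a. x - y)"
    by (simp add: sum_negf euclidean_representation)
  then show ?thesis
    using lebesgue_affine_measurable[of "\<lambda>_. - 1" x] by simp
qed

lemma borel_measurable_chi_tilde:
  assumes "E \<in> sets M"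
  shows "chi_tilde E \<in> borel_measurable M"
proof -
  have "chi_tilde E = (\<lambda>y. 1 - 2 * indicator E y)"
    by (auto simp: chi_tilde_def fun_eq_iff indicator_def)
  then show ?thesis
    using assms by simp
qed

lemma integral_chi_tilde_mult_ge:
  fixes f :: "'a::euclidean_space \<Rightarrow> real"
  assumes A: "A \<in> lmeasurable" and E: "E \<in> sets lebesgue"
    and f: "f \<in> borel_measurable lebesgue"
    and bounds: "\<And>y. y \<in> A \<Longrightarrow> a \<le> f y \<and> f y \<le> b"
  shows "a * measure lebesgue A - (a + b) * measure lebesgue (A \<inter> E)
           \<le> integral A (\<lambda>y. chi_tilde E y * f y)"
proof -
  define g where "g y = a - (a + b) * indicator E y" for y
  have AE: "E \<inter> A \<in> lmeasurable"
    using A E by (simp add: fmeasurable_Int_fmeasurable Int_commute)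
  have g_int: "g integrable_on A"
    unfolding g_def using integrable_on_const[OF A] AE
    by (intro integrable_diff integrable_on_mult_right) (simp_all add: integrable_on_indicator)
  have "integral A g = integral A (\<lambda>_. a) - integral A (\<lambda>y. (a + b) * indicator E y)"
    unfolding g_def using integrable_on_const[OF A] AE
    by (intro integral_diff integrable_on_mult_right) (simp_all add: integrable_on_indicator)
  also have "\<dots> = a * measure lebesgue A - (a + b) * measure lebesgue (A \<inter> E)"
    using lmeasure_integral[OF A] integral_indicator[OF AE] integral_mult_right[of A a "\<lambda>_. 1"]
    by (simp add: Int_commute)
  finally have "integral A g = a * measure lebesgue A - (a + b) * measure lebesgue (A \<inter> E)" .
  moreover have "(\<lambda>y. chi_tilde E y * f y) integrable_on A"
  proof (rule measurable_bounded_by_integrable_imp_integrable)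
    show "(\<lambda>y. chi_tilde E y * f y) \<in> borel_measurable (lebesgue_on A)"
      using borel_measurable_chi_tilde[OF E] f by (intro measurable_restrict_space1) simp
    show "(\<lambda>_. \<bar>a\<bar> + \<bar>b\<bar>) integrable_on A"
      using integrable_on_const[OF A] .
    show "norm (chi_tilde E y * f y) \<le> \<bar>a\<bar> + \<bar>b\<bar>" if "y \<in> A" for y
      using bounds[OF that] by (auto simp: chi_tilde_def)
  qed (use A in auto)
  moreover have "g y \<le> chi_tilde E y * f y" if "y \<in> A" for y
    using bounds[OF that] by (auto simp: g_def chi_tilde_def)
  ultimately show ?thesis
    using integral_le[OF g_int] by simp
qed

lemma kernel_bounds_on_annulus:
  fixes K :: "'a::real_normed_vector \<Rightarrow> real"
  assumes lower: "\<And>y. y \<noteq> 0 \<Longrightarrow> lam * norm y powr p \<le> K y"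
    and upper: "\<And>y. y \<noteq> 0 \<Longrightarrow> K y \<le> Lam * norm y powr p"
    and "p \<le> 0" "0 \<le> lam" "0 \<le> Lam"
    and z: "r/2 \<le> norm z" "norm z < r"
  shows "lam * r powr p \<le> K z \<and> K z \<le> Lam * (r/2) powr p"
proof
  have "0 < r/2" "z \<noteq> 0"
    using z by auto
  have "lam * r powr p \<le> lam * norm z powr p"
    using assms \<open>0 < r/2\<close> by (intro mult_left_mono powr_mono2') auto
  also have "\<dots> \<le> K z"
    using lower[OF \<open>z \<noteq> 0\<close>] .
  finally show "lam * r powr p \<le> K z" .
  have "K z \<le> Lam * norm z powr p"
    using upper[OF \<open>z \<noteq> 0\<close>] .
  also have "\<dots> \<le> Lam * (r/2) powr p"
    using assms \<open>0 < r/2\<close> by (intro mult_left_mono powr_mono2') auto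
  finally show "K z \<le> Lam * (r/2) powr p" .
qed

lemma measure_lebesgue_ball_conv_unit_ball:
  fixes c :: "'a::euclidean_space"
  assumes "0 \<le> r"
  shows "measure lebesgue (ball c r) = r ^ DIM('a) * measure lebesgue (ball (0::'a) 1)"
  using content_ball_conv_unit_ball[OF assms, of c] by (simp add: measure_completion)

lemma measure_lebesgue_annulus:
  fixes x :: "'a::euclidean_space"
  assumes "0 \<le> \<rho>" "\<rho> \<le> r"
  shows "measure lebesgue (ball x r - ball x \<rho>)
           = (r ^ DIM('a) - \<rho> ^ DIM('a)) * measure lebesgue (ball (0::'a) 1)"
proof -
  have "measure lebesgue (ball x r - ball x \<rho>) = measure lebesgue (ball x r) - measure lebesgue (ball x \<rho>)"
    using assms by (intro measurable_measure_Diff) auto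
  also have "\<dots> = (r ^ DIM('a) - \<rho> ^ DIM('a)) * measure lebesgue (ball (0::'a) 1)"
    using measure_lebesgue_ball_conv_unit_ball[of r x] measure_lebesgue_ball_conv_unit_ball[of \<rho> x] assms
    by (simp add: left_diff_distrib)
  finally show ?thesis .
qed

lemma annulus_integral_chi_tilde_kernel_ge:
  fixes K :: "'a::euclidean_space \<Rightarrow> real" and x :: 'a and s lam Lam \<gamma> :: real
  assumes K: "K \<in> borel_measurable lebesgue"
    and lower: "\<And>y. y \<noteq> 0 \<Longrightarrow> lam * norm y powr (- real DIM('a) - s) \<le> K y"
    and upper: "\<And>y. y \<noteq> 0 \<Longrightarrow> K y \<le> Lam * norm y powr (- real DIM('a) - s)"
    and s: "0 \<le> s" and lam: "0 \<le> lam" "0 \<le> Lam"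
    and E: "E \<in> sets lebesgue" and r: "0 < r"
    and small: "measure lebesgue (E \<inter> ball x r) \<le> \<gamma> * measure lebesgue (ball (0::'a) r)"
  shows "(lam * (1 - (1/2) ^ DIM('a)) - (lam + Lam * 2 powr (DIM('a) + s)) * \<gamma>)
           * measure lebesgue (ball (0::'a) 1) / r powr s
         \<le> integral (ball x r - ball x (r/2)) (\<lambda>y. chi_tilde E y * K (x - y))"
proof -
  define d where "d = real DIM('a)"
  define V where "V = measure lebesgue (ball (0::'a) 1)"
  define A where "A = ball x r - ball x (r/2)"
  define a where "a = lam * r powr (- d - s)"
  define b where "b = Lam * (r/2) powr (- d - s)"
  have "a \<le> K (x - y) \<and> K (x - y) \<le> b" if "y \<in> A" for y
    unfolding a_def b_def d_def using that lower upper s lam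
    by (intro kernel_bounds_on_annulus) (auto simp: A_def dist_norm)
  then have integral_ge: "a * measure lebesgue A - (a + b) * measure lebesgue (A \<inter> E)
               \<le> integral A (\<lambda>y. chi_tilde E y * K (x - y))"
    using measurable_compose[OF lebesgue_measurable_reflection K] E
    by (intro integral_chi_tilde_mult_ge) (auto simp: A_def)
  have measure_A: "measure lebesgue A = (1 - (1/2) ^ DIM('a)) * r ^ DIM('a) * V"
    using measure_lebesgue_annulus[of "r/2" r x] r
    by (simp add: A_def V_def power_divide algebra_simps)
  have "measure lebesgue (A \<inter> E) \<le> \<gamma> * r ^ DIM('a) * V"
  proof -
    have "measure lebesgue (A \<inter> E) \<le> measure lebesgue (E \<inter> ball x r)"
      using E by (intro measure_mono_fmeasurable)
        (auto simp: A_def fmeasurable_Int_fmeasurable Int_commute[of E])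
    then show ?thesis
      using small measure_lebesgue_ball_conv_unit_ball[of r "0::'a"] r by (simp add: V_def)
  qed
  then have loss_on_E: "(a + b) * measure lebesgue (A \<inter> E) \<le> (a + b) * (\<gamma> * r ^ DIM('a) * V)"
    using lam by (intro mult_left_mono) (simp_all add: a_def b_def)
  have "a * ((1 - (1/2) ^ DIM('a)) * r ^ DIM('a) * V) - (a + b) * (\<gamma> * r ^ DIM('a) * V)
      = (lam * (1 - (1/2) ^ DIM('a)) - (lam + Lam * 2 powr (d + s)) * \<gamma>) * V / r powr s"
  proof -
    have "(r/2) powr (- d - s) = 2 powr (d + s) * r powr (- d - s)"
      using r by (simp add: powr_divide powr_diff powr_add powr_minus_divide divide_simps)
    then have "a * ((1 - (1/2) ^ DIM('a)) * r ^ DIM('a) * V) - (a + b) * (\<gamma> * r ^ DIM('a) * V)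
        = (lam * (1 - (1/2) ^ DIM('a)) - (lam + Lam * 2 powr (d + s)) * \<gamma>) * V
          * (r powr (- d - s) * r ^ DIM('a))"
      unfolding a_def b_def by (simp add: algebra_simps)
    also have "r powr (- d - s) * r ^ DIM('a) = r powr (- d - s) * r powr d"
      using r by (simp add: d_def powr_realpow)
    also have "\<dots> = 1 / r powr s"
      by (simp add: powr_add[symmetric] powr_minus_divide)
    finally show ?thesis
      by simp
  qed
  then have "(lam * (1 - (1/2) ^ DIM('a)) - (lam + Lam * 2 powr (d + s)) * \<gamma>) * V / r powr s
      \<le> integral A (\<lambda>y. chi_tilde E y * K (x - y))"
    using integral_ge[unfolded measure_A] loss_on_E by linarith
  then show ?thesis
    unfolding A_def V_def d_def .
qed

theorem lemma4p1:
  fixes s lam Lam :: real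
  assumes "0 < s" "s < 1" "0 < lam" "lam \<le> Lam"
  shows "\<exists>C>0. \<exists>\<gamma>>0. \<forall>(K :: 'a::euclidean_space \<Rightarrow> real) E x r.
     K \<in> borel_measurable lebesgue \<longrightarrow>
     (\<forall>y. y \<noteq> 0 \<longrightarrow> lam * norm y powr (- real DIM('a) - s) \<le> K y
                   \<and> K y \<le> Lam * norm y powr (- real DIM('a) - s)
                   \<and> K y = K (- y)) \<longrightarrow>
     E \<in> sets borel \<longrightarrow> x \<in> frontier E \<longrightarrow> 0 < r \<longrightarrow>
     measure lebesgue (E \<inter> ball x r) \<le> \<gamma> * measure lebesgue (ball (0::'a) r) \<longrightarrow>
     integral (ball x r - ball x (r/2)) (\<lambda>y. chi_tilde E y * K (x - y)) \<ge> C / r powr s"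
proof -
  define q where "q = 1 - (1/2::real) ^ DIM('a)"
  define V where "V = measure lebesgue (ball (0::'a) 1)"
  define \<gamma> where "\<gamma> = lam * q / (2 * (lam + Lam * 2 powr (DIM('a) + s)))"
  have "0 < q"
    unfolding q_def by (simp add: power_less_one_iff)
  have "0 < V"
    using content_ball_pos[of 1 "0::'a"] by (simp add: V_def measure_completion)
  have weight_pos: "0 < lam + Lam * 2 powr (DIM('a) + s)"
    using assms by (simp add: add_pos_nonneg)
  then have coefficient: "lam * q - (lam + Lam * 2 powr (DIM('a) + s)) * \<gamma> = lam * q / 2"
    by (simp add: \<gamma>_def field_simps)
  show ?thesis
  proof (rule exI[of _ "lam * q * V / 2"], intro conjI exI[of _ \<gamma>] allI impI)
    show "0 < lam * q * V / 2" "0 < \<gamma>"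
      using assms \<open>0 < q\<close> \<open>0 < V\<close> weight_pos by (simp_all add: \<gamma>_def)
    fix K :: "'a \<Rightarrow> real" and E :: "'a set" and x :: 'a and r :: real
    assume K: "K \<in> borel_measurable lebesgue" and E: "E \<in> sets borel" and r: "0 < r"
      and bounds: "\<forall>y. y \<noteq> 0 \<longrightarrow> lam * norm y powr (- real DIM('a) - s) \<le> K y
                   \<and> K y \<le> Lam * norm y powr (- real DIM('a) - s) \<and> K y = K (- y)"
      and small: "measure lebesgue (E \<inter> ball x r) \<le> \<gamma> * measure lebesgue (ball (0::'a) r)"
    have lower: "lam * norm y powr (- real DIM('a) - s) \<le> K y"
      and upper: "K y \<le> Lam * norm y powr (- real DIM('a) - s)" if "y \<noteq> 0" for y
      using bounds that by blast+
    have "(lam * q - (lam + Lam * 2 powr (DIM('a) + s)) * \<gamma>) * V / r powr s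
        \<le> integral (ball x r - ball x (r/2)) (\<lambda>y. chi_tilde E y * K (x - y))"
      unfolding q_def V_def using assms E
      by (intro annulus_integral_chi_tilde_kernel_ge[OF K lower upper _ _ _ _ r small]) auto
    then show "lam * q * V / 2 / r powr s
        \<le> integral (ball x r - ball x (r/2)) (\<lambda>y. chi_tilde E y * K (x - y))"
      by (simp add: coefficient)
  qed
qed

end
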